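(* For every $n\ge 0$, the number $b(n)$ of non-squashing partitions of $n$ into distinct parts equals the number of partitions of $n$ into powers of $2$ such that either all parts are equal to $1$, or the largest part is $2^i>1$ and there is at least one part equal to $2^{i-1}$.
   Context: A partition $n=p_1+\cdots+p_k$ with $1\le p_1\le\cdots\le p_k$ is non-squashing if $p_1+\cdots+p_j\le p_{j+1}$ for all $1\le j\le k-1$. The empty partition of $0$ counts (vacuously) in both families. *)

theory Defs
  imports Main
begin

definition is_partition :: "nat list \<Rightarrow> nat \<Rightarrow> bool" where
  "is_partition p n \<longleftrightarrow> sorted p \<and> (\<forall>x\<in>set p. 0 < x) \<and> sum_list p = n"

text \<open>Non-squashing: p_1 + ... + p_j \<le> p_(j+1) for 1 \<le> j \<le> k-1 (0-based indexing of p).\<close>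
definition non_squashing :: "nat list \<Rightarrow> bool" where
  "non_squashing p \<longleftrightarrow> (\<forall>j. 1 \<le> j \<and> j < length p \<longrightarrow> sum_list (take j p) \<le> p ! j)"

definition b :: "nat \<Rightarrow> nat" where
  "b n = card {p. is_partition p n \<and> distinct p \<and> non_squashing p}"

definition pow2_special_count :: "nat \<Rightarrow> nat" where
  "pow2_special_count n = card {p. is_partition p n \<and> (\<forall>x\<in>set p. \<exists>k. x = 2 ^ k) \<and>
      ((\<forall>x\<in>set p. x = 1) \<or>
       (\<exists>i. 1 \<le> i \<and> Max (set p) = 2 ^ i \<and> 2 ^ (i - 1) \<in> set p))}"

end

(* Both counts f satisfy f 0 = 1 and f n + [n even] = (\<Sum>k\<le>n div 2. f k) for n \<ge> 1.
   Removing the largest part m of a distinct non-squashing partition of n leaves one of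
   k = n - m \<le> n div 2, and every distinct non-squashing partition of such a k extends back
   by the part n - k, except [n div 2], which would give the non-distinct [n div 2, n div 2].
   Removing the t ones of a binary partition of n and halving the remaining parts leaves a
   binary partition of k = (n - t) div 2, and being special survives in both directions,
   except that the all-ones partition of n div 2 doubles to the all-twos partition of n,
   which is not special. *)

theory Submission
  imports Defs
begin

lemma length_le_sum_list: "\<forall>x\<in>set p. 0 < (x::nat) \<Longrightarrow> length p \<le> sum_list p"
  by (induction p) auto

lemma replicate_sum_list_if_all_one: "set r \<subseteq> {1} \<Longrightarrow> r = replicate (sum_list r) (1::nat)"
  by (induction r) auto

lemma finite_partitions: "finite {p. is_partition p n}"
proof (rule finite_subset)
  show "{p. is_partition p n} \<subseteq> {p. set p \<subseteq> {..n} \<and> length p \<le> n}"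
    using length_le_sum_list member_le_sum_list unfolding is_partition_def by fastforce
  show "finite {p. set p \<subseteq> {..n} \<and> length p \<le> n}"
    by (rule finite_lists_length_le) simp
qed

lemma is_partition_0_iff: "is_partition p 0 \<longleftrightarrow> p = []"
  by (cases p) (auto simp: is_partition_def)

lemma ex_nat_iff_zero_or_Suc: "(\<exists>i. P i) \<longleftrightarrow> P 0 \<or> (\<exists>i. P (Suc i))"
  by (metis not0_implies_Suc)

lemma card_UN_image_eq_sum:
  assumes "finite K" "\<And>k. k \<in> K \<Longrightarrow> finite (F k)"
    and "inj_on (\<lambda>(k, x). h k x) (Sigma K F)"
  shows "card (\<Union>k\<in>K. h k ` F k) = (\<Sum>k\<in>K. card (F k))"
proof -
  have "(\<Union>k\<in>K. h k ` F k) = (\<lambda>(k, x). h k x) ` Sigma K F" by auto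
  then show ?thesis using assms by (simp add: card_image card_SigmaI)
qed

lemma halving_recursion_unique:
  fixes f g c :: "nat \<Rightarrow> nat"
  assumes "f 0 = g 0"
    and "\<And>n. n \<ge> 1 \<Longrightarrow> f n + c n = (\<Sum>k\<le>n div 2. f k)"
    and "\<And>n. n \<ge> 1 \<Longrightarrow> g n + c n = (\<Sum>k\<le>n div 2. g k)"
  shows "f n = g n"
proof (induction n rule: less_induct)
  case (less n)
  show ?case
  proof (cases "n = 0")
    case True
    with assms(1) show ?thesis by simp
  next
    case False
    then have "(\<Sum>k\<le>n div 2. f k) = (\<Sum>k\<le>n div 2. g k)"
      using less by (intro sum.cong) auto
    with False assms(2,3)[of n] show ?thesis by simp
  qed
qed

lemma non_squashing_snoc:
  "non_squashing (q @ [m]) \<longleftrightarrow> non_squashing q \<and> sum_list q \<le> m"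
proof (cases "q = []")
  case True
  then show ?thesis by (simp add: non_squashing_def)
next
  case False
  then have "1 \<le> length q" by (cases q) auto
  then show ?thesis
    unfolding non_squashing_def
    by (auto simp: nth_append less_Suc_eq)
qed

lemma singleton_if_sum_list_eq_member:
  assumes "x \<in> set q" "\<forall>y\<in>set q. 0 < (y::nat)" "sum_list q = x"
  shows "q = [x]"
  using assms
proof (induction q)
  case (Cons a q)
  then show ?case
    using member_le_sum_list[of x q] by (cases q) auto
qed simp

definition distinct_non_squashing_partitions :: "nat \<Rightarrow> nat list set" where
  "distinct_non_squashing_partitions n = {p. is_partition p n \<and> distinct p \<and> non_squashing p}"

lemma finite_distinct_non_squashing_partitions: "finite (distinct_non_squashing_partitions n)"
  unfolding distinct_non_squashing_partitions_def
  by (rule finite_subset[OF _ finite_partitions]) auto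

lemma snoc_in_distinct_non_squashing_partitions:
  "q @ [m] \<in> distinct_non_squashing_partitions n \<longleftrightarrow>
    q \<in> distinct_non_squashing_partitions (sum_list q) \<and> sum_list q \<le> m \<and> 0 < m \<and> q \<noteq> [m] \<and>
    n = sum_list q + m"
proof
  assume "q @ [m] \<in> distinct_non_squashing_partitions n"
  then show "q \<in> distinct_non_squashing_partitions (sum_list q) \<and> sum_list q \<le> m \<and> 0 < m \<and> q \<noteq> [m] \<and>
    n = sum_list q + m"
    by (auto simp: distinct_non_squashing_partitions_def is_partition_def non_squashing_snoc sorted_append)
next
  assume q: "q \<in> distinct_non_squashing_partitions (sum_list q) \<and> sum_list q \<le> m \<and> 0 < m \<and> q \<noteq> [m] \<and>
    n = sum_list q + m"
  then have parts: "sorted q" "\<forall>x\<in>set q. 0 < x" "distinct q" "non_squashing q"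
    by (auto simp: distinct_non_squashing_partitions_def is_partition_def)
  have le_m: "x \<le> m" if "x \<in> set q" for x
    using member_le_sum_list[OF that] q by simp
  have "m \<notin> set q"
  proof
    assume "m \<in> set q"
    with le_m q have "sum_list q = m"
      using member_le_sum_list[of m q] by simp
    with \<open>m \<in> set q\<close> parts(2) q show False
      using singleton_if_sum_list_eq_member by blast
  qed
  with q parts le_m show "q @ [m] \<in> distinct_non_squashing_partitions n"
    by (auto simp: distinct_non_squashing_partitions_def is_partition_def non_squashing_snoc sorted_append)
qed

lemma distinct_non_squashing_partitions_decomp:
  assumes "n \<ge> 1"
  shows "distinct_non_squashing_partitions n \<union> (if even n then {[n div 2, n div 2]} else {}) =
    (\<Union>k\<le>n div 2. (\<lambda>q. q @ [n - k]) ` distinct_non_squashing_partitions k)"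
    (is "?A \<union> ?E = ?U")
proof (intro equalityI subsetI)
  fix p assume "p \<in> ?A \<union> ?E"
  then consider "p \<in> ?A" | "even n" "p = [n div 2, n div 2]"
    by (auto split: if_splits)
  then show "p \<in> ?U"
  proof cases
    case 1
    with assms have "p \<noteq> []"
      by (auto simp: distinct_non_squashing_partitions_def is_partition_def)
    then obtain q m where p: "p = q @ [m]" by (metis rev_exhaust)
    with 1 show ?thesis
      by (force simp: snoc_in_distinct_non_squashing_partitions)
  next
    case 2
    with assms have "[n div 2] \<in> distinct_non_squashing_partitions (n div 2)"
      by (auto simp: distinct_non_squashing_partitions_def is_partition_def non_squashing_def)
    moreover from 2 have "p = [n div 2] @ [n - n div 2]" by auto
    ultimately show ?thesis by blast
  qed
next
  fix p assume "p \<in> ?U"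
  then obtain k q where k: "k \<le> n div 2" and q: "q \<in> distinct_non_squashing_partitions k"
    and p: "p = q @ [n - k]" by auto
  have k_sum: "sum_list q = k"
    using q by (simp add: distinct_non_squashing_partitions_def is_partition_def)
  show "p \<in> ?A \<union> ?E"
  proof (cases "q = [n - k]")
    case True
    with k_sum k have "n = 2 * k" by simp
    with True p show ?thesis by simp
  next
    case False
    from k assms have "k \<le> n - k" "k < n" by auto
    with False q k_sum have "p \<in> ?A"
      unfolding p by (simp add: snoc_in_distinct_non_squashing_partitions)
    then show ?thesis by simp
  qed
qed

lemma b_recursion:
  assumes "n \<ge> 1"
  shows "b n + (if even n then 1 else 0) = (\<Sum>k\<le>n div 2. b k)"
proof -
  let ?E = "if even n then {[n div 2, n div 2]} else {} :: nat list set"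
  have "?E \<inter> distinct_non_squashing_partitions n = {}"
    by (simp add: distinct_non_squashing_partitions_def)
  then have "card (distinct_non_squashing_partitions n) + card ?E = card (distinct_non_squashing_partitions n \<union> ?E)"
    by (simp add: card_Un_disjoint finite_distinct_non_squashing_partitions Int_commute)
  also have "\<dots> = (\<Sum>k\<le>n div 2. card (distinct_non_squashing_partitions k))"
    unfolding distinct_non_squashing_partitions_decomp[OF assms]
    by (rule card_UN_image_eq_sum) (auto simp: finite_distinct_non_squashing_partitions inj_on_def)
  finally show ?thesis
    by (cases "even n") (simp_all add: b_def distinct_non_squashing_partitions_def)
qed

lemma b_0: "b 0 = 1"
proof -
  have "{p. is_partition p 0 \<and> distinct p \<and> non_squashing p} = {[]}"
    by (auto simp: is_partition_0_iff non_squashing_def)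
  then show ?thesis by (simp add: b_def)
qed

definition top_pair :: "nat set \<Rightarrow> nat \<Rightarrow> bool" where
  "top_pair S i \<longleftrightarrow> (\<forall>x\<in>S. x \<le> 2 ^ Suc i) \<and> 2 ^ Suc i \<in> S \<and> 2 ^ i \<in> S"

definition special :: "nat set \<Rightarrow> bool" where
  "special S \<longleftrightarrow> S \<subseteq> {1} \<or> (\<exists>i. top_pair S i)"

lemma special_iff_Max:
  assumes "finite S"
  shows "special S \<longleftrightarrow>
    (\<forall>x\<in>S. x = 1) \<or> (\<exists>i. 1 \<le> i \<and> Max S = 2 ^ i \<and> 2 ^ (i - 1) \<in> S)"
proof -
  have "(\<exists>i. top_pair S i) \<longleftrightarrow> (\<exists>i. 1 \<le> i \<and> Max S = 2 ^ i \<and> 2 ^ (i - 1) \<in> S)"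
  proof
    assume "\<exists>i. top_pair S i"
    then obtain i where "\<forall>x\<in>S. x \<le> 2 ^ Suc i" "2 ^ Suc i \<in> S" "2 ^ i \<in> S"
      by (auto simp: top_pair_def)
    with assms have "Max S = 2 ^ Suc i" by (intro Max_eqI) auto
    with \<open>2 ^ i \<in> S\<close> show "\<exists>i. 1 \<le> i \<and> Max S = 2 ^ i \<and> 2 ^ (i - 1) \<in> S"
      by (intro exI[of _ "Suc i"]) simp
  next
    assume "\<exists>i. 1 \<le> i \<and> Max S = 2 ^ i \<and> 2 ^ (i - 1) \<in> S"
    then obtain i where i: "1 \<le> i" "Max S = 2 ^ i" "2 ^ (i - 1) \<in> S" by blast
    define j where "j = i - 1"
    from i have j: "Max S = 2 ^ Suc j" "2 ^ j \<in> S" by (simp_all add: j_def)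
    then have "S \<noteq> {}" by blast
    with assms j have "top_pair S j"
      unfolding top_pair_def by (metis Max_ge Max_in)
    then show "\<exists>i. top_pair S i" ..
  qed
  then show ?thesis by (auto simp: special_def)
qed

lemma top_pair_double_image_Suc: "top_pair ((*) 2 ` S) (Suc i) \<longleftrightarrow> top_pair S i"
proof -
  have "(\<forall>x\<in>(*) 2 ` S. x \<le> 2 * 2 ^ Suc i) \<longleftrightarrow> (\<forall>x\<in>S. x \<le> 2 ^ Suc i)" by auto
  moreover have "2 * x \<in> (*) 2 ` S \<longleftrightarrow> x \<in> S" for x :: nat by auto
  ultimately show ?thesis
    unfolding top_pair_def by (simp only: power_Suc[of 2 "Suc i"] power_Suc[of 2 i])
qed

lemma top_pair_insert_one_Suc: "top_pair (insert 1 S) (Suc i) \<longleftrightarrow> top_pair S (Suc i)"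
  by (auto simp: top_pair_def)

lemma special_double_image: "special ((*) 2 ` S) \<longleftrightarrow> special S \<and> S \<noteq> {1}"
proof -
  have "\<not> top_pair ((*) 2 ` S) 0"
    by (auto simp: top_pair_def)
  then have "(\<exists>i. top_pair ((*) 2 ` S) i) \<longleftrightarrow> (\<exists>i. top_pair S i)"
    by (simp add: ex_nat_iff_zero_or_Suc[of "top_pair _"] top_pair_double_image_Suc)
  moreover have "top_pair S i \<Longrightarrow> S \<noteq> {1}" for i
    by (auto simp: top_pair_def)
  moreover have "(*) 2 ` S \<subseteq> {1} \<longleftrightarrow> S = {}" by auto
  ultimately show ?thesis
    unfolding special_def by blast
qed

lemma special_insert_one_double_image:
  assumes "0 \<notin> S"
  shows "special (insert 1 ((*) 2 ` S)) \<longleftrightarrow> special S"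
proof -
  let ?U = "insert 1 ((*) 2 ` S)"
  from assms have zero: "top_pair ?U 0 \<longleftrightarrow> S = {1}"
    by (auto simp: top_pair_def le_Suc_eq)
  have "(\<exists>i. top_pair ?U i) \<longleftrightarrow> top_pair ?U 0 \<or> (\<exists>i. top_pair ?U (Suc i))"
    by (rule ex_nat_iff_zero_or_Suc)
  also have "\<dots> \<longleftrightarrow> S = {1} \<or> (\<exists>i. top_pair S i)"
    by (simp only: zero top_pair_insert_one_Suc top_pair_double_image_Suc)
  finally have "(\<exists>i. top_pair ?U i) \<longleftrightarrow> S = {1} \<or> (\<exists>i. top_pair S i)" .
  moreover have "insert 1 ((*) 2 ` S) \<subseteq> {1} \<longleftrightarrow> S = {}" by auto
  moreover have "S \<subseteq> {1} \<longleftrightarrow> S = {} \<or> S = {1}" by auto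
  ultimately show ?thesis
    unfolding special_def by blast
qed

definition special_binary_partitions :: "nat \<Rightarrow> nat list set" where
  "special_binary_partitions n =
    {p. is_partition p n \<and> (\<forall>x\<in>set p. \<exists>k. x = 2 ^ k) \<and> special (set p)}"

lemma pow2_special_count_eq_card:
  "pow2_special_count n = card (special_binary_partitions n)"
  unfolding pow2_special_count_def special_binary_partitions_def
  by (simp add: special_iff_Max[OF finite_set])

lemma finite_special_binary_partitions: "finite (special_binary_partitions n)"
  unfolding special_binary_partitions_def
  by (rule finite_subset[OF _ finite_partitions]) auto

definition ones_doubled :: "nat \<Rightarrow> nat list \<Rightarrow> nat list" where
  "ones_doubled t r = replicate t 1 @ map ((*) 2) r"

lemma count_ones_doubled: "count_list (ones_doubled t r) 1 = t"
proof -
  have "count_list (replicate t 1) (1::nat) = t" by (induction t) auto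
  moreover have "count_list (map ((*) 2) r) (1::nat) = 0"
    by (auto simp: count_list_0_iff)
  ultimately show ?thesis by (simp add: ones_doubled_def)
qed

lemma ones_doubled_eq_iff: "ones_doubled t r = ones_doubled t' r' \<longleftrightarrow> t = t' \<and> r = r'"
proof
  assume eq: "ones_doubled t r = ones_doubled t' r'"
  then have "t = t'" by (metis count_ones_doubled)
  with eq show "t = t' \<and> r = r'"
    by (simp add: ones_doubled_def inj_map_eq_map inj_def)
qed simp

lemma set_ones_doubled:
  "set (ones_doubled t r) = (if t = 0 then (*) 2 ` set r else insert 1 ((*) 2 ` set r))"
  by (auto simp: ones_doubled_def)

lemma double_eq_power_of_two_iff: "(\<exists>k. 2 * x = 2 ^ k) \<longleftrightarrow> (\<exists>k. (x::nat) = 2 ^ k)"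
proof
  assume "\<exists>k. 2 * x = 2 ^ k"
  then obtain k where "2 * x = 2 ^ k" ..
  then show "\<exists>k. x = 2 ^ k" by (cases k) auto
next
  assume "\<exists>k. x = 2 ^ k"
  then obtain k where "x = 2 ^ k" ..
  then have "2 * x = 2 ^ Suc k" by simp
  then show "\<exists>k. 2 * x = 2 ^ k" ..
qed

lemma sorted_binary_eq_ones_doubled:
  assumes "sorted p" "\<forall>x\<in>set p. \<exists>k. x = 2 ^ k"
  shows "\<exists>t r. p = ones_doubled t r"
  using assms
proof (induction p)
  case Nil
  have "[] = ones_doubled 0 []" by (simp add: ones_doubled_def)
  then show ?case by blast
next
  case (Cons a p)
  then obtain t r where p: "p = ones_doubled t r" by auto
  show ?case
  proof (cases "a = 1")
    case True
    with p have "a # p = ones_doubled (Suc t) r" by (simp add: ones_doubled_def)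
    then show ?thesis by blast
  next
    case False
    from Cons.prems obtain k where "a = 2 ^ k" by auto
    with False obtain j where a: "a = 2 * 2 ^ j" by (cases k) auto
    with Cons.prems have "\<forall>y\<in>set p. 2 * 2 ^ j \<le> y" by simp
    moreover have "(1::nat) < 2 * 2 ^ j" using one_le_power[of "2::nat" j] by linarith
    ultimately have "1 \<notin> set p" by (meson leD)
    with p have "t = 0" by (auto simp: set_ones_doubled split: if_splits)
    with p a have "a # p = ones_doubled 0 (2 ^ j # r)" by (simp add: ones_doubled_def)
    then show ?thesis by blast
  qed
qed

lemma ones_doubled_in_special_binary_partitions:
  "ones_doubled t r \<in> special_binary_partitions n \<longleftrightarrow>
    r \<in> special_binary_partitions (sum_list r) \<and> n = t + 2 * sum_list r \<and>
    \<not> (t = 0 \<and> set r = {1})"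
proof -
  have pos: "(\<forall>x\<in>set (ones_doubled t r). 0 < x) \<longleftrightarrow> (\<forall>x\<in>set r. 0 < x)"
    by (auto simp: set_ones_doubled)
  have sorted: "sorted (ones_doubled t r) \<longleftrightarrow> sorted r" if "\<forall>x\<in>set r. 0 < x"
    using that by (auto simp: ones_doubled_def sorted_append sorted_map Suc_leI)
  have binary: "(\<forall>x\<in>set (ones_doubled t r). \<exists>k. x = 2 ^ k) \<longleftrightarrow> (\<forall>x\<in>set r. \<exists>k. x = 2 ^ k)"
    using double_eq_power_of_two_iff by (auto simp: set_ones_doubled intro: exI[of _ 0])
  have special: "special (set (ones_doubled t r)) \<longleftrightarrow> special (set r) \<and> \<not> (t = 0 \<and> set r = {1})"
    if "\<forall>x\<in>set r. 0 < x"
  proof -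
    from that have "0 \<notin> set r" by auto
    then show ?thesis
      using special_insert_one_double_image by (simp add: set_ones_doubled special_double_image)
  qed
  have "sum_list (ones_doubled t r) = t + 2 * sum_list r"
    by (simp add: ones_doubled_def sum_list_replicate sum_list_const_mult)
  with pos sorted binary special show ?thesis
    unfolding special_binary_partitions_def is_partition_def by auto
qed

lemma replicate_two_notin_special_binary_partitions:
  assumes "0 < k"
  shows "replicate k 2 \<notin> special_binary_partitions n"
proof -
  have "\<not> special {2}"
    by (auto simp: special_def top_pair_def)
  with assms show ?thesis
    by (simp add: special_binary_partitions_def)
qed

lemma replicate_one_in_special_binary_partitions:
  "replicate k 1 \<in> special_binary_partitions k"
  by (auto simp: special_binary_partitions_def is_partition_def special_def sum_list_replicate
      intro: exI[of _ 0])

lemma special_binary_partitions_decomp: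
  assumes "n \<ge> 1"
  shows "special_binary_partitions n \<union> (if even n then {replicate (n div 2) 2} else {}) =
    (\<Union>k\<le>n div 2. ones_doubled (n - 2 * k) ` special_binary_partitions k)"
    (is "?A \<union> ?E = ?U")
proof (intro equalityI subsetI)
  fix p assume "p \<in> ?A \<union> ?E"
  then consider "p \<in> ?A" | "even n" "p = replicate (n div 2) 2"
    by (auto split: if_splits)
  then show "p \<in> ?U"
  proof cases
    case 1
    then have "sorted p" "\<forall>x\<in>set p. \<exists>k. x = 2 ^ k"
      by (simp_all add: special_binary_partitions_def is_partition_def)
    then obtain t r where p: "p = ones_doubled t r"
      using sorted_binary_eq_ones_doubled by blast
    with 1 have r: "r \<in> special_binary_partitions (sum_list r)" and n: "n = t + 2 * sum_list r"
      by (simp_all add: ones_doubled_in_special_binary_partitions)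
    from n have "sum_list r \<le> n div 2" "t = n - 2 * sum_list r" by auto
    with p r show ?thesis by blast
  next
    case 2
    then have "p = ones_doubled (n - 2 * (n div 2)) (replicate (n div 2) 1)"
      by (simp add: ones_doubled_def map_replicate)
    then show ?thesis
      using replicate_one_in_special_binary_partitions by blast
  qed
next
  fix p assume "p \<in> ?U"
  then obtain k r where k: "k \<le> n div 2" and r: "r \<in> special_binary_partitions k"
    and p: "p = ones_doubled (n - 2 * k) r" by auto
  have k_sum: "sum_list r = k"
    using r by (simp add: special_binary_partitions_def is_partition_def)
  show "p \<in> ?A \<union> ?E"
  proof (cases "n - 2 * k = 0 \<and> set r = {1}")
    case True
    then have "r = replicate k 1"
      using replicate_sum_list_if_all_one[of r] k_sum by simp
    with True have "p = replicate k 2"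
      unfolding p by (simp add: ones_doubled_def map_replicate)
    moreover have "n = 2 * k"
    proof -
      from True have "n \<le> 2 * k" by simp
      with k show ?thesis by presburger
    qed
    ultimately show ?thesis by simp
  next
    case False
    with k r k_sum have "p \<in> ?A"
      unfolding p by (simp add: ones_doubled_in_special_binary_partitions)
    then show ?thesis by simp
  qed
qed

lemma pow2_special_count_recursion:
  assumes "n \<ge> 1"
  shows "pow2_special_count n + (if even n then 1 else 0) =
    (\<Sum>k\<le>n div 2. pow2_special_count k)"
proof -
  let ?E = "if even n then {replicate (n div 2) 2} else {} :: nat list set"
  have "?E \<inter> special_binary_partitions n = {}"
    using assms replicate_two_notin_special_binary_partitions[of "n div 2" n] by auto
  then have "card (special_binary_partitions n) + card ?E =
      card (special_binary_partitions n \<union> ?E)"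
    by (intro card_Un_disjoint[symmetric] finite_special_binary_partitions) (auto simp: Int_commute)
  also have "\<dots> = (\<Sum>k\<le>n div 2. card (special_binary_partitions k))"
    unfolding special_binary_partitions_decomp[OF assms]
    by (rule card_UN_image_eq_sum)
      (auto simp: finite_special_binary_partitions inj_on_def ones_doubled_eq_iff)
  finally show ?thesis
    by (cases "even n") (simp_all add: pow2_special_count_eq_card)
qed

lemma pow2_special_count_0: "pow2_special_count 0 = 1"
proof -
  have "special_binary_partitions 0 = {[]}"
    by (auto simp: special_binary_partitions_def is_partition_0_iff special_def)
  then show ?thesis by (simp add: pow2_special_count_eq_card)
qed

theorem mainTheorem4:
  fixes n :: nat
  shows "b n = pow2_special_count n"
  by (rule halving_recursion_unique[where c = "\<lambda>n. if even n then 1 else 0"])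
    (simp_all add: b_0 pow2_special_count_0 b_recursion pow2_special_count_recursion)

end
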